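(* For every $d\ge 3$ the cyclic Kautz digraph $CK(d,3)$ satisfies: (a) it is $(d-1)$-regular; (b) it has $N=d^3-d$ vertices and $(d+1)d(d-1)^2$ arcs; (c) its diameter is $5$; (d) it is (isomorphic to) the line digraph of the subKautz digraph $sK(d,2)$, and $sK(d,2)$ is obtained from the Kautz digraph $K(d,2)$ by removing all arcs belonging to digons (directed 2-cycles); (e) it is vertex-transitive; (f) it is Eulerian and Hamiltonian.
   Context: Kautz digraph $K(d,\ell)$: vertices $x_1\ldots x_\ell\in\mathbb Z_{d+1}^\ell$ with $x_i\neq x_{i+1}$; arcs $x_1\ldots x_\ell\to x_2\ldots x_\ell y$ for $y\neq x_\ell$. SubKautz digraph $sK(d,\ell)$: same vertices; arcs $x_1\ldots x_\ell\to x_2\ldots x_\ell x_{\ell+1}$ for $x_{\ell+1}\neq x_1,x_\ell$. Cyclic Kautz digraph $CK(d,\ell)$: vertices $x_1\ldots x_\ell$ with $x_i\neq x_{i+1}$ ($1\le i\le\ell-1$) and $x_\ell\neq x_1$; arcs $x_1\ldots x_\ell\to x_2\ldots x_\ell y$ for $y\neq x_2,x_\ell$. The line digraph $L(G)$ has the arcs of $G$ as vertices, with $(u,v)\to(w,z)$ iff $v=w$. *)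

theory Defs
  imports Main "HOL-Library.Extended_Nat"
begin

type_synonym 'a digraph = "'a set \<times> ('a \<times> 'a) set"

definition verts :: "'a digraph \<Rightarrow> 'a set" where "verts G = fst G"
definition arcs :: "'a digraph \<Rightarrow> ('a \<times> 'a) set" where "arcs G = snd G"

definition kautz_words :: "nat \<Rightarrow> nat \<Rightarrow> nat list set" where
  "kautz_words d l = {xs. length xs = l \<and> set xs \<subseteq> {0..d} \<and>
                          (\<forall>i. i + 1 < l \<longrightarrow> xs ! i \<noteq> xs ! (i + 1))}"

definition kautz :: "nat \<Rightarrow> nat \<Rightarrow> nat list digraph" where
  "kautz d l = (kautz_words d l,
     {(xs, ys). xs \<in> kautz_words d l \<and>
        (\<exists>y. y \<le> d \<and> y \<noteq> last xs \<and> ys = tl xs @ [y])})"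

definition subkautz :: "nat \<Rightarrow> nat \<Rightarrow> nat list digraph" where
  "subkautz d l = (kautz_words d l,
     {(xs, ys). xs \<in> kautz_words d l \<and>
        (\<exists>y. y \<le> d \<and> y \<noteq> hd xs \<and> y \<noteq> last xs \<and> ys = tl xs @ [y])})"

definition cyclic_kautz_words :: "nat \<Rightarrow> nat \<Rightarrow> nat list set" where
  "cyclic_kautz_words d l = {xs \<in> kautz_words d l. last xs \<noteq> hd xs}"

definition cyclic_kautz :: "nat \<Rightarrow> nat \<Rightarrow> nat list digraph" where
  "cyclic_kautz d l = (cyclic_kautz_words d l,
     {(xs, ys). xs \<in> cyclic_kautz_words d l \<and>
        (\<exists>y. y \<le> d \<and> y \<noteq> xs ! 1 \<and> y \<noteq> last xs \<and> ys = tl xs @ [y])})"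

definition line_digraph :: "'a digraph \<Rightarrow> ('a \<times> 'a) digraph" where
  "line_digraph G = (arcs G, {(a, b). a \<in> arcs G \<and> b \<in> arcs G \<and> snd a = fst b})"

definition out_degree :: "'a digraph \<Rightarrow> 'a \<Rightarrow> nat" where
  "out_degree G v = card {w. (v, w) \<in> arcs G}"

definition in_degree :: "'a digraph \<Rightarrow> 'a \<Rightarrow> nat" where
  "in_degree G v = card {u. (u, v) \<in> arcs G}"

definition regular :: "'a digraph \<Rightarrow> nat \<Rightarrow> bool" where
  "regular G k \<longleftrightarrow> (\<forall>v \<in> verts G. out_degree G v = k \<and> in_degree G v = k)"

text \<open>Distance = length of a shortest walk (infinity if none); diameter = max distance.\<close>
definition dg_dist :: "'a digraph \<Rightarrow> 'a \<Rightarrow> 'a \<Rightarrow> enat" where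
  "dg_dist G u v = (INF k \<in> {k. (u, v) \<in> (arcs G) ^^ k}. enat k)"

definition diameter :: "'a digraph \<Rightarrow> enat" where
  "diameter G = (SUP u \<in> verts G. SUP v \<in> verts G. dg_dist G u v)"

definition dg_iso :: "'a digraph \<Rightarrow> 'b digraph \<Rightarrow> bool" where
  "dg_iso G H \<longleftrightarrow> (\<exists>f. bij_betw f (verts G) (verts H) \<and>
      (\<forall>u \<in> verts G. \<forall>v \<in> verts G. (u, v) \<in> arcs G \<longleftrightarrow> (f u, f v) \<in> arcs H))"

definition remove_digons :: "'a digraph \<Rightarrow> 'a digraph" where
  "remove_digons G = (verts G, {(u, v) \<in> arcs G. (v, u) \<notin> arcs G})"

definition automorphism :: "'a digraph \<Rightarrow> ('a \<Rightarrow> 'a) \<Rightarrow> bool" where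
  "automorphism G f \<longleftrightarrow> bij_betw f (verts G) (verts G) \<and>
      (\<forall>u \<in> verts G. \<forall>v \<in> verts G. (u, v) \<in> arcs G \<longleftrightarrow> (f u, f v) \<in> arcs G)"

definition vertex_transitive :: "'a digraph \<Rightarrow> bool" where
  "vertex_transitive G \<longleftrightarrow>
     (\<forall>u \<in> verts G. \<forall>v \<in> verts G. \<exists>f. automorphism G f \<and> f u = v)"

definition eulerian :: "'a digraph \<Rightarrow> bool" where
  "eulerian G \<longleftrightarrow> (\<exists>es. es \<noteq> [] \<and> distinct es \<and> set es = arcs G \<and>
      (\<forall>i. i + 1 < length es \<longrightarrow> snd (es ! i) = fst (es ! (i + 1))) \<and>
      snd (last es) = fst (hd es))"

definition hamiltonian :: "'a digraph \<Rightarrow> bool" where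
  "hamiltonian G \<longleftrightarrow> (\<exists>vs. vs \<noteq> [] \<and> distinct vs \<and> set vs = verts G \<and>
      (\<forall>i. i + 1 < length vs \<longrightarrow> (vs ! i, vs ! (i + 1)) \<in> arcs G) \<and>
      (last vs, hd vs) \<in> arcs G)"

end

(*
  A vertex abc of CK(d,3) is a word of three distinct letters, i.e. an arc ab -> bc of sK(d,2),
  and abc -> bce is an arc of CK(d,3) exactly when ab -> bc and bc -> ce are consecutive arcs of
  sK(d,2): so CK(d,3) is the line digraph of sK(d,2). Since sK(d,2) is (d-1)-regular and strongly
  connected it has an Euler circuit, which is a Hamiltonian cycle of its line digraph.
  Substituting letters by a permutation of {0..d} is an automorphism of CK(d,3), and such a
  substitution maps any word of three distinct letters to any other. A vertex x1x2x3 reaches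
  y1y2y3 along the word x1x2x3 a b y1y2y3 or x1x2x3 a y1y2y3, where d >= 3 leaves room for suitable
  fresh letters a, b; this bounds the diameter by 5, and 012 needs all five steps to reach 210.
*)
theory Submission
  imports Defs "Graph_Theory.Graph_Theory"
begin

hide_const (open) pre_digraph.verts pre_digraph.arcs Digraph.in_degree Digraph.out_degree

lemma verts_line_digraph [simp]: "verts (line_digraph G) = arcs G"
  by (simp add: line_digraph_def Defs.verts_def Defs.arcs_def)

lemma arcs_line_digraph [simp]:
  "arcs (line_digraph G) = {(e, f). e \<in> arcs G \<and> f \<in> arcs G \<and> snd e = fst f}"
  by (simp add: line_digraph_def Defs.arcs_def)

lemma digraph_eqI: "verts G = verts H \<Longrightarrow> arcs G = arcs H \<Longrightarrow> G = H"
  by (simp add: Defs.verts_def Defs.arcs_def prod_eq_iff)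

lemma verts_remove_digons [simp]: "verts (remove_digons G) = verts G"
  by (simp add: remove_digons_def Defs.verts_def)

lemma arcs_remove_digons [simp]: "arcs (remove_digons G) = {(u, v) \<in> arcs G. (v, u) \<notin> arcs G}"
  by (simp add: remove_digons_def Defs.arcs_def)

lemma pcas_imp_chained:
  "pcas u p v \<Longrightarrow> (\<forall>i. i + 1 < length p \<longrightarrow> snd (p ! i) = fst (p ! (i + 1)))
     \<and> (p \<noteq> [] \<longrightarrow> fst (hd p) = u \<and> snd (last p) = v)"
proof (induction p arbitrary: u)
  case Nil
  then show ?case by simp
next
  case (Cons e es)
  then have "fst e = u" and IH: "\<forall>i. i + 1 < length es \<longrightarrow> snd (es ! i) = fst (es ! (i + 1))"
    "es \<noteq> [] \<longrightarrow> fst (hd es) = snd e \<and> snd (last es) = v"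
    by auto
  have "snd ((e # es) ! i) = fst ((e # es) ! (i + 1))" if "i + 1 < length (e # es)" for i
    using that IH by (cases i) (auto simp: hd_conv_nth)
  then show ?case using \<open>fst e = u\<close> IH Cons.prems by (cases "es = []") auto
qed

lemma eulerian_if_strongly_connected_balanced:
  assumes fin: "finite (verts G)" and wf: "arcs G \<subseteq> verts G \<times> verts G" and ne: "arcs G \<noteq> {}"
    and conn: "\<forall>u\<in>verts G. \<forall>v\<in>verts G. (u, v) \<in> (arcs G)\<^sup>*"
    and bal: "\<forall>v\<in>verts G. out_degree G v = in_degree G v"
  shows "eulerian G"
proof -
  define H where "H = \<lparr>pverts = verts G, parcs = arcs G\<rparr>"
  have "finite (arcs G)" using fin wf by (meson finite_SigmaI finite_subset)
  then interpret H: fin_digraph "with_proj H"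
    by unfold_locales (use wf fin in \<open>auto simp: H_def\<close>)
  txt \<open>Connectivity in the sense of the library is strong connectivity of the symmetric
    closure.\<close>
  have "connected (with_proj H)"
    unfolding connected_def strongly_connected_def reachable_def
  proof (intro conjI ballI)
    show "pre_digraph.verts (with_proj (mk_symmetric (with_proj H))) \<noteq> {}"
      using ne wf by (auto simp: H_def)
  next
    fix u v assume "u \<in> pre_digraph.verts (with_proj (mk_symmetric (with_proj H)))"
      and "v \<in> pre_digraph.verts (with_proj (mk_symmetric (with_proj H)))"
    then have "(u, v) \<in> rtrancl_on (verts G) (arcs G)"
      using conn wf by (intro rtrancl_consistent_rtrancl_on) (auto simp: H_def)
    then show "(u, v) \<in> rtrancl_on (pre_digraph.verts (with_proj (mk_symmetric (with_proj H))))
          (arcs_ends (with_proj (mk_symmetric (with_proj H))))"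
      by (rule rtrancl_on_mono[rotated 2]) (auto simp: H_def parcs_mk_symmetric)
  qed
  moreover have "Digraph.in_degree (with_proj H) u = Digraph.out_degree (with_proj H) u"
    if "u \<in> pre_digraph.verts (with_proj H)" for u
  proof -
    have "in_arcs (with_proj H) u = (\<lambda>x. (x, u)) ` {x. (x, u) \<in> arcs G}"
      and "out_arcs (with_proj H) u = (\<lambda>x. (u, x)) ` {x. (u, x) \<in> arcs G}"
      by (auto simp: in_arcs_def out_arcs_def H_def)
    then show ?thesis
      using bal that unfolding Digraph.in_degree_def Digraph.out_degree_def
      by (simp add: card_image inj_on_def H_def Defs.in_degree_def Defs.out_degree_def)
  qed
  ultimately obtain u p where "H.euler_trail u p u"
    using H.closed_euler1 by blast
  then have "distinct p" "pcas u p u" "set p = arcs G"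
    by (auto simp: pre_digraph.euler_trail_def pre_digraph.trail_def pre_digraph.awalk_def
        cas_with_proj_eq H_def)
  with ne show ?thesis
    unfolding eulerian_def by (intro exI[of _ p]) (auto dest: pcas_imp_chained)
qed

lemma hamiltonian_line_digraph:
  assumes "eulerian G"
  shows "hamiltonian (line_digraph G)"
proof -
  obtain es where es: "es \<noteq> []" "distinct es" "set es = arcs G"
    and chained: "\<forall>i. i + 1 < length es \<longrightarrow> snd (es ! i) = fst (es ! (i + 1))"
    and closed: "snd (last es) = fst (hd es)"
    using assms unfolding eulerian_def by blast
  show ?thesis
    unfolding hamiltonian_def
  proof (intro exI[of _ es] conjI allI impI)
    show "(es ! i, es ! (i + 1)) \<in> arcs (line_digraph G)" if "i + 1 < length es" for i
    proof -
      have "es ! i \<in> arcs G" "es ! (i + 1) \<in> arcs G"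
        using that nth_mem[of i es] nth_mem[of "i + 1" es] es(3) by simp_all
      then show ?thesis using that chained by simp
    qed
    have "last es \<in> arcs G" "hd es \<in> arcs G"
      using es(1,3) last_in_set hd_in_set by blast+
    then show "(last es, hd es) \<in> arcs (line_digraph G)"
      using closed by simp
  qed (use es in simp_all)
qed

lemma hamiltonian_if_iso:
  assumes "dg_iso G H" and "hamiltonian H"
  shows "hamiltonian G"
proof -
  obtain f where f: "bij_betw f (verts G) (verts H)"
    and arc: "\<forall>u\<in>verts G. \<forall>v\<in>verts G. (u, v) \<in> arcs G \<longleftrightarrow> (f u, f v) \<in> arcs H"
    using assms(1) unfolding dg_iso_def by blast
  obtain vs where vs: "vs \<noteq> []" "distinct vs" "set vs = verts H"
    and step: "\<forall>i. i + 1 < length vs \<longrightarrow> (vs ! i, vs ! (i + 1)) \<in> arcs H"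
    and close: "(last vs, hd vs) \<in> arcs H"
    using assms(2) unfolding hamiltonian_def by blast
  define g where "g = the_inv_into (verts G) f"
  have g: "bij_betw g (verts H) (verts G)"
    unfolding g_def using f by (rule bij_betw_the_inv_into)
  have f_g: "f (g x) = x" if "x \<in> verts H" for x
    unfolding g_def using f that by (simp add: bij_betw_def f_the_inv_into_f)
  have arc_g: "(g x, g y) \<in> arcs G \<longleftrightarrow> (x, y) \<in> arcs H" if "x \<in> verts H" "y \<in> verts H" for x y
  proof -
    have "g x \<in> verts G" "g y \<in> verts G"
      using g that by (simp_all add: bij_betw_apply)
    then show ?thesis using arc f_g that by simp
  qed
  show ?thesis
    unfolding hamiltonian_def
  proof (intro exI[of _ "map g vs"] conjI allI impI)
    show "distinct (map g vs)"
      using vs(2,3) g by (simp add: distinct_map bij_betw_def)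
    show "set (map g vs) = verts G"
      using vs(3) g by (simp add: bij_betw_def)
    show "(map g vs ! i, map g vs ! (i + 1)) \<in> arcs G" if "i + 1 < length (map g vs)" for i
    proof -
      have "vs ! i \<in> verts H" "vs ! (i + 1) \<in> verts H"
        using that nth_mem[of i vs] nth_mem[of "i + 1" vs] vs(3) by simp_all
      then show ?thesis using that step arc_g by simp
    qed
    have "last vs \<in> verts H" "hd vs \<in> verts H"
      using vs(1,3) last_in_set hd_in_set by blast+
    then show "(last (map g vs), hd (map g vs)) \<in> arcs G"
      using close arc_g vs(1) by (simp add: last_map hd_map)
  qed (use vs in simp)
qed

lemma card_arcs_if_out_degree:
  assumes "finite (verts G)" and "arcs G \<subseteq> verts G \<times> verts G"
    and "\<forall>v\<in>verts G. out_degree G v = k"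
  shows "card (arcs G) = card (verts G) * k"
proof -
  have "arcs G = Sigma (verts G) (\<lambda>v. {w. (v, w) \<in> arcs G})"
    using assms(2) by auto
  moreover have "finite {w. (v, w) \<in> arcs G}" for v
    using assms(1,2) by (auto intro: finite_subset[of _ "verts G"])
  ultimately have "card (arcs G) = (\<Sum>v\<in>verts G. out_degree G v)"
    using assms(1) unfolding Defs.out_degree_def by (metis card_SigmaI)
  then show ?thesis using assms(3) by simp
qed

lemma dg_dist_le: "(u, v) \<in> arcs G ^^ k \<Longrightarrow> dg_dist G u v \<le> enat k"
  unfolding dg_dist_def by (rule INF_lower) simp

lemma dg_dist_ge: "(\<And>k. k < n \<Longrightarrow> (u, v) \<notin> arcs G ^^ k) \<Longrightarrow> enat n \<le> dg_dist G u v"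
  unfolding dg_dist_def by (rule INF_greatest) (auto simp: not_less[symmetric])

lemma dg_dist_le_diameter: "u \<in> verts G \<Longrightarrow> v \<in> verts G \<Longrightarrow> dg_dist G u v \<le> diameter G"
  unfolding diameter_def by (intro SUP_upper2[of u] SUP_upper)

lemma diameter_le: "(\<And>u v. u \<in> verts G \<Longrightarrow> v \<in> verts G \<Longrightarrow> dg_dist G u v \<le> n) \<Longrightarrow> diameter G \<le> n"
  unfolding diameter_def by (intro SUP_least) simp

lemma set_tl_subset: "set (tl xs) \<subseteq> set xs"
  by (cases xs) auto

lemma exists_bij_betw_map_eq:
  assumes "finite S" and "distinct xs" and "distinct ys" and "length xs = length ys"
    and "set xs \<subseteq> S" and "set ys \<subseteq> S"
  shows "\<exists>\<sigma>. bij_betw \<sigma> S S \<and> map \<sigma> xs = ys"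
proof -
  define n where "n = length xs"
  define h where "h x = ys ! the_inv_into {..<n} ((!) xs) x" for x
  have nth_xs: "bij_betw ((!) xs) {..<n} (set xs)" and nth_ys: "bij_betw ((!) ys) {..<n} (set ys)"
    using assms by (auto intro: bij_betw_nth simp: n_def)
  have h: "bij_betw h (set xs) (set ys)"
    unfolding h_def using bij_betw_trans[OF bij_betw_the_inv_into[OF nth_xs] nth_ys]
    by (simp add: comp_def)
  have h_nth: "h (xs ! i) = ys ! i" if "i < n" for i
    unfolding h_def using that nth_xs by (simp add: bij_betw_def the_inv_into_f_f)
  have "card (S - set xs) = card (S - set ys)"
    using assms by (simp add: card_Diff_subset distinct_card)
  then obtain g where g: "bij_betw g (S - set xs) (S - set ys)"
    using assms(1) finite_same_card_bij by blast
  define \<sigma> where "\<sigma> x = (if x \<in> set xs then h x else g x)" for x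
  have "bij_betw \<sigma> (set xs) (set ys) = bij_betw h (set xs) (set ys)"
    and "bij_betw \<sigma> (S - set xs) (S - set ys) = bij_betw g (S - set xs) (S - set ys)"
    by (intro bij_betw_cong; simp add: \<sigma>_def)+
  with h g have "bij_betw \<sigma> (set xs \<union> (S - set xs)) (set ys \<union> (S - set ys))"
    by (intro bij_betw_combine) auto
  then have "bij_betw \<sigma> S S"
    using assms(5,6) by (simp add: Un_Diff_cancel Un_absorb1)
  moreover have "map \<sigma> xs = ys"
    using assms(4) h_nth by (intro nth_equalityI) (auto simp: \<sigma>_def n_def)
  ultimately show ?thesis by blast
qed

lemma kautz_words_2_iff:
  "p \<in> kautz_words d 2 \<longleftrightarrow> (\<exists>a b. p = [a, b] \<and> a \<le> d \<and> b \<le> d \<and> a \<noteq> b)"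
  unfolding kautz_words_def by (auto simp: numeral_2_eq_2 length_Suc_conv less_Suc_eq)

lemma cyclic_kautz_words_3_iff:
  "u \<in> cyclic_kautz_words d 3 \<longleftrightarrow>
   (\<exists>a b c. u = [a, b, c] \<and> a \<le> d \<and> b \<le> d \<and> c \<le> d \<and> a \<noteq> b \<and> b \<noteq> c \<and> c \<noteq> a)"
  unfolding cyclic_kautz_words_def kautz_words_def
  by (auto simp: numeral_3_eq_3 length_Suc_conv less_Suc_eq)

lemma cyclic_kautz_words_3_eq:
  "cyclic_kautz_words d 3 = {u. length u = 3 \<and> distinct u \<and> set u \<subseteq> {0..d}}"
  unfolding set_eq_iff cyclic_kautz_words_3_iff mem_Collect_eq
  by (auto simp: numeral_3_eq_3 length_Suc_conv)

lemma verts_kautz [simp]: "verts (kautz d l) = kautz_words d l"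
  by (simp add: kautz_def Defs.verts_def)

lemma verts_subkautz [simp]: "verts (subkautz d l) = kautz_words d l"
  by (simp add: subkautz_def Defs.verts_def)

lemma verts_cyclic_kautz [simp]: "verts (cyclic_kautz d l) = cyclic_kautz_words d l"
  by (simp add: cyclic_kautz_def Defs.verts_def)

lemma arc_kautz_2_iff:
  "(p, q) \<in> arcs (kautz d 2) \<longleftrightarrow> p \<in> kautz_words d 2 \<and> q \<in> kautz_words d 2 \<and> tl p = butlast q"
  unfolding kautz_def Defs.arcs_def kautz_words_2_iff by auto

lemma arc_subkautz_2_iff:
  "(p, q) \<in> arcs (subkautz d 2) \<longleftrightarrow>
   (\<exists>a b c. p = [a, b] \<and> q = [b, c] \<and> [a, b, c] \<in> cyclic_kautz_words d 3)"
  unfolding subkautz_def Defs.arcs_def kautz_words_2_iff cyclic_kautz_words_3_iff by auto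

lemma arc_cyclic_kautz_3_iff:
  "(u, v) \<in> arcs (cyclic_kautz d 3) \<longleftrightarrow>
   u \<in> cyclic_kautz_words d 3 \<and> v \<in> cyclic_kautz_words d 3 \<and> tl u = butlast v"
  unfolding cyclic_kautz_def Defs.arcs_def cyclic_kautz_words_3_iff by auto

lemma subkautz_2_eq_remove_digons: "subkautz d 2 = remove_digons (kautz d 2)"
proof -
  have "arcs (subkautz d 2) = {(p, q) \<in> arcs (kautz d 2). (q, p) \<notin> arcs (kautz d 2)}"
    by (auto simp: arc_subkautz_2_iff arc_kautz_2_iff kautz_words_2_iff cyclic_kautz_words_3_iff)
  then show ?thesis
    by (intro digraph_eqI) simp_all
qed

lemma cyclic_kautz_3_iso_line_subkautz_2:
  "dg_iso (cyclic_kautz d 3) (line_digraph (subkautz d 2))"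
proof -
  let ?\<phi> = "\<lambda>u. (butlast u, tl u)"
  have "inj_on ?\<phi> (cyclic_kautz_words d 3)"
    by (auto simp: inj_on_def cyclic_kautz_words_3_iff)
  moreover have "?\<phi> ` cyclic_kautz_words d 3 = arcs (subkautz d 2)"
  proof
    show "?\<phi> ` cyclic_kautz_words d 3 \<subseteq> arcs (subkautz d 2)"
      by (auto simp: arc_subkautz_2_iff cyclic_kautz_words_3_iff)
    show "arcs (subkautz d 2) \<subseteq> ?\<phi> ` cyclic_kautz_words d 3"
    proof clarify
      fix p q assume "(p, q) \<in> arcs (subkautz d 2)"
      then obtain a b c where "p = [a, b]" "q = [b, c]" "[a, b, c] \<in> cyclic_kautz_words d 3"
        by (auto simp: arc_subkautz_2_iff)
      then show "(p, q) \<in> ?\<phi> ` cyclic_kautz_words d 3"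
        by (intro rev_image_eqI[of "[a, b, c]"]) simp_all
    qed
  qed
  ultimately have bij: "bij_betw ?\<phi> (cyclic_kautz_words d 3) (arcs (subkautz d 2))"
    by (simp add: bij_betw_def)
  show ?thesis
    unfolding dg_iso_def
  proof (intro exI[of _ ?\<phi>] conjI ballI)
    fix u v assume uv: "u \<in> verts (cyclic_kautz d 3)" "v \<in> verts (cyclic_kautz d 3)"
    then have "?\<phi> u \<in> arcs (subkautz d 2)" "?\<phi> v \<in> arcs (subkautz d 2)"
      using bij_betw_apply[OF bij, of u] bij_betw_apply[OF bij, of v] by simp_all
    then show "(u, v) \<in> arcs (cyclic_kautz d 3) \<longleftrightarrow> (?\<phi> u, ?\<phi> v) \<in> arcs (line_digraph (subkautz d 2))"
      using uv by (simp add: arc_cyclic_kautz_3_iff)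
  qed (use bij in simp)
qed

lemma card_atLeastAtMost_Diff_two:
  "a \<le> d \<Longrightarrow> b \<le> d \<Longrightarrow> a \<noteq> b \<Longrightarrow> card ({0..d} - {a, b}) = d - 1"
  by (subst card_Diff_subset) auto

lemma regular_cyclic_kautz_3: "regular (cyclic_kautz d 3) (d - 1)"
  unfolding regular_def Defs.out_degree_def Defs.in_degree_def
proof (intro ballI conjI)
  fix u assume "u \<in> verts (cyclic_kautz d 3)"
  then obtain a b c where u: "u = [a, b, c]" and abc: "a \<le> d" "b \<le> d" "c \<le> d" "a \<noteq> b" "b \<noteq> c" "c \<noteq> a"
    by (auto simp: cyclic_kautz_words_3_iff)
  have "{v. (u, v) \<in> arcs (cyclic_kautz d 3)} = (\<lambda>y. [b, c, y]) ` ({0..d} - {b, c})"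
    using abc by (auto simp: u arc_cyclic_kautz_3_iff cyclic_kautz_words_3_iff)
  then show "card {v. (u, v) \<in> arcs (cyclic_kautz d 3)} = d - 1"
    using abc by (simp add: card_image inj_on_def card_atLeastAtMost_Diff_two)
  have "{v. (v, u) \<in> arcs (cyclic_kautz d 3)} = (\<lambda>x. [x, a, b]) ` ({0..d} - {a, b})"
    using abc by (auto simp: u arc_cyclic_kautz_3_iff cyclic_kautz_words_3_iff)
  then show "card {v. (v, u) \<in> arcs (cyclic_kautz d 3)} = d - 1"
    using abc by (simp add: card_image inj_on_def card_atLeastAtMost_Diff_two)
qed

lemma card_cyclic_kautz_words_3:
  assumes "2 \<le> d"
  shows "card (cyclic_kautz_words d 3) = (d + 1) * d * (d - 1)"
proof -
  have "card (cyclic_kautz_words d 3) = \<Prod>{card {0..d} - 3 + 1 .. card {0..d}}"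
    unfolding cyclic_kautz_words_3_eq using assms by (intro card_lists_distinct_length_eq) auto
  also have "{card {0..d} - 3 + 1 .. card {0..d}} = {d + 1, d, d - 1}"
    using assms by auto
  finally show ?thesis
    using assms by (simp add: algebra_simps)
qed

lemma arcs_cyclic_kautz_3_subset:
  "arcs (cyclic_kautz d 3) \<subseteq> verts (cyclic_kautz d 3) \<times> verts (cyclic_kautz d 3)"
  by (auto simp: arc_cyclic_kautz_3_iff)

lemma finite_cyclic_kautz_words_3: "finite (cyclic_kautz_words d 3)"
  by (rule finite_subset[OF _ finite_lists_length_eq[of "{0..d}" 3]])
    (auto simp: cyclic_kautz_words_3_eq)

fun distinct_triples :: "'a list \<Rightarrow> bool" where
  "distinct_triples (a # b # c # zs) \<longleftrightarrow> distinct [a, b, c] \<and> distinct_triples (b # c # zs)"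
| "distinct_triples _ \<longleftrightarrow> True"

lemma relpow_cyclic_kautz_3_if_distinct_triples:
  assumes "set zs \<subseteq> {0..d}" and "distinct_triples zs" and "length zs = k + 3"
  shows "(take 3 zs, drop k zs) \<in> arcs (cyclic_kautz d 3) ^^ k"
  using assms
proof (induction k arbitrary: zs)
  case 0
  then show ?case by simp
next
  case (Suc k)
  then obtain a b c z ws where zs: "zs = a # b # c # z # ws"
    by (auto simp: numeral_3_eq_3 length_Suc_conv)
  have "([a, b, c], [b, c, z]) \<in> arcs (cyclic_kautz d 3)"
    using Suc.prems by (auto simp: zs arc_cyclic_kautz_3_iff cyclic_kautz_words_3_iff)
  moreover have "([b, c, z], drop k (b # c # z # ws)) \<in> arcs (cyclic_kautz d 3) ^^ k"
    using Suc.IH[of "b # c # z # ws"] Suc.prems by (simp add: zs)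
  ultimately have "([a, b, c], drop k (b # c # z # ws)) \<in> arcs (cyclic_kautz d 3) ^^ Suc k"
    by (rule relpow_Suc_I2)
  then show ?case
    by (simp add: zs del: relpow.simps)
qed

lemma exists_fresh_letter:
  assumes "3 \<le> d"
  shows "\<exists>z. z \<le> (d::nat) \<and> z \<noteq> p \<and> z \<noteq> q \<and> z \<noteq> r"
proof -
  have "card {p, q, r} \<le> 3"
    by (simp add: card_insert_if)
  then have "card {p, q, r} < card {0..d}"
    using assms by simp
  then have "\<not> {0..d} \<subseteq> {p, q, r}"
    by (meson card_mono finite.emptyI finite_insert not_le)
  then show ?thesis by auto
qed

lemma cyclic_kautz_3_walk_le_5:
  assumes d: "3 \<le> d" and u: "u \<in> cyclic_kautz_words d 3" and v: "v \<in> cyclic_kautz_words d 3"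
  shows "\<exists>k\<le>5. (u, v) \<in> arcs (cyclic_kautz d 3) ^^ k"
proof -
  obtain x1 x2 x3 where u_eq: "u = [x1, x2, x3]" and x: "x1 \<le> d" "x2 \<le> d" "x3 \<le> d" "x1 \<noteq> x2" "x2 \<noteq> x3" "x3 \<noteq> x1"
    using u by (auto simp: cyclic_kautz_words_3_iff)
  obtain y1 y2 y3 where v_eq: "v = [y1, y2, y3]" and y: "y1 \<le> d" "y2 \<le> d" "y3 \<le> d" "y1 \<noteq> y2" "y2 \<noteq> y3" "y3 \<noteq> y1"
    using v by (auto simp: cyclic_kautz_words_3_iff)
  have walk: "\<exists>k\<le>5. (u, v) \<in> arcs (cyclic_kautz d 3) ^^ k"
    if "length ws \<le> 2" "set ws \<subseteq> {0..d}" "distinct_triples (u @ ws @ v)" for ws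
  proof (intro exI[of _ "length ws + 3"] conjI)
    have len: "length u = 3" "length v = 3"
      by (simp_all add: u_eq v_eq)
    have "(take 3 (u @ ws @ v), drop (length ws + 3) (u @ ws @ v)) \<in> arcs (cyclic_kautz d 3) ^^ (length ws + 3)"
      using that x y len by (intro relpow_cyclic_kautz_3_if_distinct_triples) (auto simp: u_eq v_eq)
    moreover have "take 3 (u @ ws @ v) = u" "drop (length ws + 3) (u @ ws @ v) = v"
      using len by simp_all
    ultimately show "(u, v) \<in> arcs (cyclic_kautz d 3) ^^ (length ws + 3)"
      by (simp only:)
  qed (use that in simp)
  obtain a where a: "a \<le> d" "a \<noteq> x2" "a \<noteq> x3" "a \<noteq> y1"
    using exists_fresh_letter[OF d] by blast
  consider (y2_new) "y2 \<noteq> x2" "y2 \<noteq> x3" | (y2_x3) "y2 = x3" | (y1_x3) "y2 = x2" "y1 = x3"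
    | (short) "y2 = x2" "y1 \<noteq> x3"
    by blast
  then show ?thesis
  proof cases
    case y2_new
    obtain b where "b \<le> d" "b \<noteq> x3" "b \<noteq> y1" "b \<noteq> y2"
      using exists_fresh_letter[OF d] by blast
    then show ?thesis
      using y2_new x y by (intro walk[of "[y2, b]"]) (auto simp: u_eq v_eq)
  next
    case y2_x3
    obtain b where "b \<le> d" "b \<noteq> x3" "b \<noteq> a" "b \<noteq> y1"
      using exists_fresh_letter[OF d] by blast
    then show ?thesis
      using y2_x3 a x y by (intro walk[of "[a, b]"]) (auto simp: u_eq v_eq)
  next
    case y1_x3
    obtain b where "b \<le> d" "b \<noteq> x3" "b \<noteq> a" "b \<noteq> y2"
      using exists_fresh_letter[OF d] by blast
    then show ?thesis
      using y1_x3 a x y by (intro walk[of "[a, b]"]) (auto simp: u_eq v_eq)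
  next
    case short
    then show ?thesis
      using a x y by (intro walk[of "[a]"]) (auto simp: u_eq v_eq)
  qed
qed

lemma relpow_le_4_unfold:
  "R ^^ 0 = Id" "R ^^ 1 = R" "R ^^ 2 = R O R" "R ^^ 3 = R O R O R" "R ^^ 4 = R O R O R O R"
  by (simp_all add: numeral_eq_Suc relpow_commute O_assoc)

text \<open>A shorter walk from \<open>012\<close> to \<open>210\<close> would spell a word \<open>012\<dots>210\<close> of length at
  most \<open>7\<close> in which every window of three letters has distinct letters; there is none.\<close>
lemma cyclic_kautz_3_no_short_walk:
  "k < 5 \<Longrightarrow> ([0, 1, 2], [2, 1, 0]) \<notin> arcs (cyclic_kautz d 3) ^^ k"
proof -
  assume "k < 5"
  then consider "k = 0" | "k = 1" | "k = 2" | "k = 3" | "k = 4" by linarith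
  then show ?thesis
    by cases (auto simp: relpow_le_4_unfold arc_cyclic_kautz_3_iff cyclic_kautz_words_3_iff)
qed

lemma diameter_cyclic_kautz_3:
  assumes "3 \<le> d"
  shows "diameter (cyclic_kautz d 3) = 5"
proof (rule antisym)
  show "diameter (cyclic_kautz d 3) \<le> 5"
  proof (rule diameter_le)
    fix u v assume "u \<in> verts (cyclic_kautz d 3)" "v \<in> verts (cyclic_kautz d 3)"
    then obtain k where "k \<le> 5" and "(u, v) \<in> arcs (cyclic_kautz d 3) ^^ k"
      using cyclic_kautz_3_walk_le_5[OF assms] by auto
    then have "dg_dist (cyclic_kautz d 3) u v \<le> enat k"
      by (intro dg_dist_le)
    also have "enat k \<le> 5"
      using \<open>k \<le> 5\<close> by (simp add: numeral_eq_enat)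
    finally show "dg_dist (cyclic_kautz d 3) u v \<le> 5" .
  qed
  have "[0, 1, 2] \<in> verts (cyclic_kautz d 3)" "[2, 1, 0] \<in> verts (cyclic_kautz d 3)"
    using assms by (auto simp: cyclic_kautz_words_3_iff)
  then have "dg_dist (cyclic_kautz d 3) [0, 1, 2] [2, 1, 0] \<le> diameter (cyclic_kautz d 3)"
    by (rule dg_dist_le_diameter)
  moreover have "enat 5 \<le> dg_dist (cyclic_kautz d 3) [0, 1, 2] [2, 1, 0]"
    by (rule dg_dist_ge) (rule cyclic_kautz_3_no_short_walk)
  ultimately show "5 \<le> diameter (cyclic_kautz d 3)"
    by (simp add: numeral_eq_enat)
qed

lemma map_mem_cyclic_kautz_words_iff:
  assumes \<sigma>: "bij_betw \<sigma> {0..d} {0..d}" and u: "set u \<subseteq> {0..d}"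
  shows "map \<sigma> u \<in> cyclic_kautz_words d l \<longleftrightarrow> u \<in> cyclic_kautz_words d l"
proof -
  have eq_iff: "\<sigma> x = \<sigma> y \<longleftrightarrow> x = y" if "x \<in> set u" "y \<in> set u" for x y
    using \<sigma> u that by (meson bij_betw_imp_inj_on inj_on_eq_iff subsetD)
  have "set (map \<sigma> u) \<subseteq> {0..d}"
    using \<sigma> u by (auto simp: bij_betw_def)
  moreover have "map \<sigma> u ! i = map \<sigma> u ! (i + 1) \<longleftrightarrow> u ! i = u ! (i + 1)" if "i + 1 < length u" for i
    using that eq_iff by simp
  moreover have "last (map \<sigma> u) = hd (map \<sigma> u) \<longleftrightarrow> last u = hd u"
    using eq_iff by (cases "u = []") (simp_all add: last_map hd_map)
  ultimately show ?thesis
    using u unfolding cyclic_kautz_words_def kautz_words_def by auto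
qed

lemma automorphism_map_cyclic_kautz_3:
  assumes \<sigma>: "bij_betw \<sigma> {0..d} {0..d}"
  shows "automorphism (cyclic_kautz d 3) (map \<sigma>)"
proof -
  have sub: "cyclic_kautz_words d 3 \<subseteq> lists {0..d}"
    by (auto simp: cyclic_kautz_words_3_eq)
  have "map \<sigma> ` cyclic_kautz_words d 3 = cyclic_kautz_words d 3"
  proof
    show "map \<sigma> ` cyclic_kautz_words d 3 \<subseteq> cyclic_kautz_words d 3"
      using sub map_mem_cyclic_kautz_words_iff[OF \<sigma>] by (auto simp: lists_eq_set)
    show "cyclic_kautz_words d 3 \<subseteq> map \<sigma> ` cyclic_kautz_words d 3"
    proof
      fix w assume w: "w \<in> cyclic_kautz_words d 3"
      then obtain x where "x \<in> lists {0..d}" "w = map \<sigma> x"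
        using sub bij_lists[OF \<sigma>] unfolding bij_betw_def by blast
      with w show "w \<in> map \<sigma> ` cyclic_kautz_words d 3"
        using map_mem_cyclic_kautz_words_iff[OF \<sigma>] by (auto simp: lists_eq_set)
    qed
  qed
  with sub have bij: "bij_betw (map \<sigma>) (cyclic_kautz_words d 3) (cyclic_kautz_words d 3)"
    using bij_lists[OF \<sigma>] by (rule bij_betw_subset[rotated])
  have "(u, v) \<in> arcs (cyclic_kautz d 3) \<longleftrightarrow> (map \<sigma> u, map \<sigma> v) \<in> arcs (cyclic_kautz d 3)"
    if uv: "u \<in> cyclic_kautz_words d 3" "v \<in> cyclic_kautz_words d 3" for u v
  proof -
    have "set (tl u) \<union> set (butlast v) \<subseteq> {0..d}"
      using sub uv set_tl_subset[of u] by (auto simp: lists_eq_set dest: in_set_butlastD)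
    then have "inj_on \<sigma> (set (tl u) \<union> set (butlast v))"
      using bij_betw_imp_inj_on[OF \<sigma>] by (rule inj_on_subset[rotated])
    moreover have "map \<sigma> u \<in> cyclic_kautz_words d 3" "map \<sigma> v \<in> cyclic_kautz_words d 3"
      using bij uv by (simp_all add: bij_betw_apply)
    ultimately show ?thesis
      using uv by (simp add: arc_cyclic_kautz_3_iff inj_on_map_eq_map flip: map_tl map_butlast)
  qed
  with bij show ?thesis
    unfolding automorphism_def by simp
qed

lemma vertex_transitive_cyclic_kautz_3: "vertex_transitive (cyclic_kautz d 3)"
  unfolding vertex_transitive_def verts_cyclic_kautz
proof (intro ballI)
  fix u v assume "u \<in> cyclic_kautz_words d 3" "v \<in> cyclic_kautz_words d 3"
  then obtain \<sigma> where "bij_betw \<sigma> {0..d} {0..d}" "map \<sigma> u = v"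
    using exists_bij_betw_map_eq[of "{0..d}" u v] by (auto simp: cyclic_kautz_words_3_eq)
  then show "\<exists>f. automorphism (cyclic_kautz d 3) f \<and> f u = v"
    using automorphism_map_cyclic_kautz_3 by blast
qed

lemma cyclic_kautz_3_reachable:
  "3 \<le> d \<Longrightarrow> u \<in> cyclic_kautz_words d 3 \<Longrightarrow> v \<in> cyclic_kautz_words d 3 \<Longrightarrow>
   (u, v) \<in> (arcs (cyclic_kautz d 3))\<^sup>*"
  using cyclic_kautz_3_walk_le_5 relpow_imp_rtrancl by blast

lemma eulerian_cyclic_kautz_3:
  assumes "3 \<le> d"
  shows "eulerian (cyclic_kautz d 3)"
proof (rule eulerian_if_strongly_connected_balanced)
  show "finite (verts (cyclic_kautz d 3))"
    by (simp add: finite_cyclic_kautz_words_3)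
  show "arcs (cyclic_kautz d 3) \<subseteq> verts (cyclic_kautz d 3) \<times> verts (cyclic_kautz d 3)"
    by (rule arcs_cyclic_kautz_3_subset)
  have "([0, 1, 2], [1, 2, 0]) \<in> arcs (cyclic_kautz d 3)"
    using assms by (simp add: arc_cyclic_kautz_3_iff cyclic_kautz_words_3_iff)
  then show "arcs (cyclic_kautz d 3) \<noteq> {}" by blast
  show "\<forall>u\<in>verts (cyclic_kautz d 3). \<forall>v\<in>verts (cyclic_kautz d 3). (u, v) \<in> (arcs (cyclic_kautz d 3))\<^sup>*"
    using cyclic_kautz_3_reachable[OF assms] by simp
  show "\<forall>v\<in>verts (cyclic_kautz d 3). out_degree (cyclic_kautz d 3) v = in_degree (cyclic_kautz d 3) v"
    using regular_cyclic_kautz_3 by (simp add: regular_def)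
qed

lemma regular_subkautz_2: "regular (subkautz d 2) (d - 1)"
  unfolding regular_def Defs.out_degree_def Defs.in_degree_def
proof (intro ballI conjI)
  fix p assume "p \<in> verts (subkautz d 2)"
  then obtain a b where p: "p = [a, b]" and ab: "a \<le> d" "b \<le> d" "a \<noteq> b"
    by (auto simp: kautz_words_2_iff)
  have "{q. (p, q) \<in> arcs (subkautz d 2)} = (\<lambda>c. [b, c]) ` ({0..d} - {a, b})"
    using ab by (auto simp: p arc_subkautz_2_iff cyclic_kautz_words_3_iff)
  then show "card {q. (p, q) \<in> arcs (subkautz d 2)} = d - 1"
    using ab by (simp add: card_image inj_on_def card_atLeastAtMost_Diff_two)
  have "{q. (q, p) \<in> arcs (subkautz d 2)} = (\<lambda>x. [x, a]) ` ({0..d} - {a, b})"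
    using ab by (auto simp: p arc_subkautz_2_iff cyclic_kautz_words_3_iff)
  then show "card {q. (q, p) \<in> arcs (subkautz d 2)} = d - 1"
    using ab by (simp add: card_image inj_on_def card_atLeastAtMost_Diff_two)
qed

lemma tl_rtrancl_subkautz_2:
  "(u, v) \<in> (arcs (cyclic_kautz d 3))\<^sup>* \<Longrightarrow> (tl u, tl v) \<in> (arcs (subkautz d 2))\<^sup>*"
proof (induction rule: rtrancl_induct)
  case (step v w)
  then have "(tl v, tl w) \<in> arcs (subkautz d 2)"
    by (auto simp: arc_cyclic_kautz_3_iff arc_subkautz_2_iff cyclic_kautz_words_3_iff)
  with step.IH show ?case by (rule rtrancl_into_rtrancl)
qed simp

lemma eulerian_subkautz_2:
  assumes "3 \<le> d"
  shows "eulerian (subkautz d 2)"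
proof (rule eulerian_if_strongly_connected_balanced)
  have "kautz_words d 2 \<subseteq> lists {0..d} \<inter> {p. length p = 2}"
    by (auto simp: kautz_words_2_iff)
  then show "finite (verts (subkautz d 2))"
    by (auto intro: finite_subset[OF _ finite_lists_length_eq[of "{0..d}" 2]] simp: lists_eq_set)
  show "arcs (subkautz d 2) \<subseteq> verts (subkautz d 2) \<times> verts (subkautz d 2)"
    by (auto simp: arc_subkautz_2_iff kautz_words_2_iff cyclic_kautz_words_3_iff)
  have "([0, 1], [1, 2]) \<in> arcs (subkautz d 2)"
    using assms by (simp add: arc_subkautz_2_iff cyclic_kautz_words_3_iff)
  then show "arcs (subkautz d 2) \<noteq> {}" by blast
  have lift: "\<exists>u\<in>cyclic_kautz_words d 3. tl u = p" if p: "p \<in> kautz_words d 2" for p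
  proof -
    obtain a b where "p = [a, b]" "a \<le> d" "b \<le> d" "a \<noteq> b"
      using p by (auto simp: kautz_words_2_iff)
    moreover obtain x where "x \<le> d" "x \<noteq> a" "x \<noteq> b"
      using exists_fresh_letter[OF assms] by blast
    ultimately show ?thesis
      by (intro bexI[of _ "[x, a, b]"]) (auto simp: cyclic_kautz_words_3_iff)
  qed
  show "\<forall>p\<in>verts (subkautz d 2). \<forall>q\<in>verts (subkautz d 2). (p, q) \<in> (arcs (subkautz d 2))\<^sup>*"
  proof (intro ballI)
    fix p q assume "p \<in> verts (subkautz d 2)" "q \<in> verts (subkautz d 2)"
    then obtain u v where uv: "u \<in> cyclic_kautz_words d 3" "v \<in> cyclic_kautz_words d 3"
      and "tl u = p" "tl v = q"
      using lift by (metis verts_subkautz)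
    have "(tl u, tl v) \<in> (arcs (subkautz d 2))\<^sup>*"
      using cyclic_kautz_3_reachable[OF assms uv] by (rule tl_rtrancl_subkautz_2)
    with \<open>tl u = p\<close> \<open>tl v = q\<close> show "(p, q) \<in> (arcs (subkautz d 2))\<^sup>*" by simp
  qed
  show "\<forall>v\<in>verts (subkautz d 2). out_degree (subkautz d 2) v = in_degree (subkautz d 2) v"
    using regular_subkautz_2 by (simp add: regular_def)
qed

lemma hamiltonian_cyclic_kautz_3:
  assumes "3 \<le> d"
  shows "hamiltonian (cyclic_kautz d 3)"
  using cyclic_kautz_3_iso_line_subkautz_2 hamiltonian_line_digraph[OF eulerian_subkautz_2[OF assms]]
  by (rule hamiltonian_if_iso)

theorem mainTheorem13:
  fixes d :: nat
  assumes "d \<ge> 3"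
  shows "regular (cyclic_kautz d 3) (d - 1)
    \<and> card (verts (cyclic_kautz d 3)) = d ^ 3 - d
    \<and> card (arcs (cyclic_kautz d 3)) = (d + 1) * d * (d - 1) ^ 2
    \<and> diameter (cyclic_kautz d 3) = 5
    \<and> dg_iso (cyclic_kautz d 3) (line_digraph (subkautz d 2))
    \<and> subkautz d 2 = remove_digons (kautz d 2)
    \<and> vertex_transitive (cyclic_kautz d 3)
    \<and> eulerian (cyclic_kautz d 3)
    \<and> hamiltonian (cyclic_kautz d 3)"
proof (intro conjI)
  have card_verts: "card (verts (cyclic_kautz d 3)) = (d + 1) * d * (d - 1)"
    using assms by (simp add: card_cyclic_kautz_words_3)
  then show "card (verts (cyclic_kautz d 3)) = d ^ 3 - d"
    by (simp add: power3_eq_cube algebra_simps)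
  have "card (arcs (cyclic_kautz d 3)) = card (verts (cyclic_kautz d 3)) * (d - 1)"
    using finite_cyclic_kautz_words_3 arcs_cyclic_kautz_3_subset regular_cyclic_kautz_3
    by (intro card_arcs_if_out_degree) (simp_all add: regular_def)
  then show "card (arcs (cyclic_kautz d 3)) = (d + 1) * d * (d - 1) ^ 2"
    unfolding card_verts by (simp add: power2_eq_square)
qed (use assms regular_cyclic_kautz_3 diameter_cyclic_kautz_3 cyclic_kautz_3_iso_line_subkautz_2
  subkautz_2_eq_remove_digons vertex_transitive_cyclic_kautz_3 eulerian_cyclic_kautz_3
  hamiltonian_cyclic_kautz_3 in auto)

end
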